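(* Let $N\in\mathbb{N}^*$, $\sigma>0$, and let $W$ be a symmetric $N\times N$ random matrix whose entries on and above the diagonal are i.i.d. $\mathcal{N}(0,\sigma^2)$. For $T\in\mathbb{N}^*$ let $B_{T,N}$ be its generalised matrix of moments of order $T$. Then for all $l_1,l_2\in\{0,\ldots,T-1\}$, \[ B_{T,N}(l_1,l_2)\le\frac1{\sigma^2}\cdot\frac{1}{\frac{l_1+l_2}{N(N+1)/2}+1}\,B_{T,N}(l_1+1,l_2+1). \]
   Context: Generalised matrix of moments: for $i\in[N]$, $\beta_{i,0}=1$, $\beta_{i,l}=\sum_{i_1,\ldots,i_l=1}^N W_{ii_1}\cdots W_{i_{l-1}i_l}$ for $l\ge1$, and $B_{T,N}(l_1,l_2)=\mathbb{E}\sum_{i=1}^N\beta_{i,l_1}\beta_{i,l_2}$, $0\le l_1,l_2\le T$. *)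

theory Defs
  imports "HOL-Probability.Probability"
begin

text \<open>Index set of the independent entries (on and above the diagonal), 0-based indices.\<close>
definition upper_idx :: "nat \<Rightarrow> (nat \<times> nat) set" where
  "upper_idx N = {(i, j). i \<le> j \<and> j < N}"

definition gauss_entries :: "nat \<Rightarrow> real \<Rightarrow> ((nat \<times> nat) \<Rightarrow> real) measure" where
  "gauss_entries N \<sigma> = PiM (upper_idx N) (\<lambda>_. density lborel (normal_density 0 \<sigma>))"

definition symW :: "((nat \<times> nat) \<Rightarrow> real) \<Rightarrow> nat \<Rightarrow> nat \<Rightarrow> real" where
  "symW x i j = x (min i j, max i j)"

text \<open>beta_{i,l} = sum over i_1..i_l in [N] of W_{i i_1} W_{i_1 i_2} ... W_{i_{l-1} i_l};
  the path (i_1,...,i_l) is the list xs, and beta_{i,0} = 1 (empty product).\<close>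
definition beta :: "nat \<Rightarrow> (nat \<Rightarrow> nat \<Rightarrow> real) \<Rightarrow> nat \<Rightarrow> nat \<Rightarrow> real" where
  "beta N W i l = (\<Sum>xs\<in>{xs. length xs = l \<and> set xs \<subseteq> {..<N}}.
                      \<Prod>k<l. W ((i # xs) ! k) (xs ! k))"

definition Bmom :: "nat \<Rightarrow> real \<Rightarrow> nat \<Rightarrow> nat \<Rightarrow> real" where
  "Bmom N \<sigma> l1 l2 = (\<integral>x. (\<Sum>i<N. beta N (symW x) i l1 * beta N (symW x) i l2) \<partial>gauss_entries N \<sigma>)"

end

theory Submission
  imports Defs
begin

text \<open>Gluing the two paths of \<open>\<beta>\<^sub>i\<^sub>,\<^sub>l\<^sub>1\<close> and \<open>\<beta>\<^sub>i\<^sub>,\<^sub>l\<^sub>2\<close> at \<open>i\<close> shows that \<open>B(l\<^sub>1,l\<^sub>2)\<close> depends only on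
  \<open>m = l\<^sub>1 + l\<^sub>2\<close>: it is the sum \<open>S(m)\<close> over all walks with \<open>m\<close> steps of the product of the Gaussian
  moments \<open>\<mu>(k\<^sub>e)\<close>, where \<open>k\<^sub>e\<close> is the number of traversals of the edge \<open>e\<close>.
  Inserting a detour \<open>w\<^sub>p \<rightarrow> j \<rightarrow> w\<^sub>p\<close> into a walk raises one \<open>k\<^sub>e\<close> by 2, which multiplies its moment
  by \<open>\<sigma>\<^sup>2 (k\<^sub>e + 1)\<close>; for fixed \<open>p\<close> this insertion is injective, so summing over all walks and detours
  bounds a weighted version of \<open>S(m)\<close> by \<open>(m + 1) S(m + 2)\<close>. The weight is at least
  \<open>(m + 1)(N - 1) + (m + 1)\<^sup>2 / N\<close>, because every return of the walk to a vertex is counted and the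
  numbers of visits satisfy Cauchy-Schwarz; this yields \<open>\<sigma>\<^sup>2 (m + d) S(m) \<le> d S(m + 2)\<close> with
  \<open>d = N(N + 1)/2\<close>.\<close>

section \<open>Moments of the centred normal distribution\<close>

definition gauss_moment :: "real \<Rightarrow> nat \<Rightarrow> real" where
  "gauss_moment \<sigma> k = (\<integral>t. t ^ k \<partial>density lborel (normal_density 0 \<sigma>))"

lemma gauss_moment_eq_lborel:
  "gauss_moment \<sigma> k = (\<integral>t. normal_density 0 \<sigma> t * t ^ k \<partial>lborel)"
  unfolding gauss_moment_def by (subst integral_density) auto

lemma integrable_gauss_power:
  assumes "\<sigma> > 0"
  shows "integrable (density lborel (normal_density 0 \<sigma>)) (\<lambda>t. t ^ k)"
  using integrable_normal_moment[of \<sigma> 0 k] assms by (subst integrable_density) auto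

lemma gauss_moment_odd: "\<sigma> > 0 \<Longrightarrow> gauss_moment \<sigma> (2 * k + 1) = 0"
  unfolding gauss_moment_eq_lborel using integral_normal_moment_odd[of \<sigma> 0 k] by simp

lemma gauss_moment_even:
  "\<sigma> > 0 \<Longrightarrow> gauss_moment \<sigma> (2 * k) = fact (2 * k) / ((2 / \<sigma>\<^sup>2) ^ k * fact k)"
  unfolding gauss_moment_eq_lborel using integral_normal_moment_even[of \<sigma> 0 k] by simp

lemma gauss_moment_nonneg:
  assumes "\<sigma> > 0" shows "0 \<le> gauss_moment \<sigma> k"
proof (cases "even k")
  case True
  then obtain j where "k = 2 * j" by (elim evenE)
  then show ?thesis using assms by (simp add: gauss_moment_even)
next
  case False
  then obtain j where "k = 2 * j + 1" by (elim oddE)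
  then show ?thesis using gauss_moment_odd[OF assms, of j] by simp
qed

lemma gauss_moment_Suc_Suc:
  assumes "\<sigma> > 0"
  shows "gauss_moment \<sigma> (Suc (Suc k)) = \<sigma>\<^sup>2 * (k + 1) * gauss_moment \<sigma> k"
proof (cases "even k")
  case True
  then obtain j where k: "k = 2 * j" by (elim evenE)
  have "gauss_moment \<sigma> (2 * Suc j) = fact (2 * Suc j) / ((2 / \<sigma>\<^sup>2) ^ Suc j * fact (Suc j))"
    using assms by (rule gauss_moment_even)
  also have "\<dots> = (2 * (real j + 1) * (2 * j + 1) * fact (2 * j)) /
                   ((2 / \<sigma>\<^sup>2) * (2 / \<sigma>\<^sup>2) ^ j * ((real j + 1) * fact j))"
    by (simp add: fact_Suc algebra_simps)
  also have "\<dots> = \<sigma>\<^sup>2 * (2 * j + 1) * (fact (2 * j) / ((2 / \<sigma>\<^sup>2) ^ j * fact j))"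
  proof -
    have cancel: "2 * a * c * f / ((2 / \<sigma>\<^sup>2) * t * (a * g)) = \<sigma>\<^sup>2 * c * (f / (t * g))"
      if "a \<noteq> 0" for a c f t g :: real
      using that assms by (simp add: field_simps)
    show ?thesis by (rule cancel) simp
  qed
  finally show ?thesis using assms by (simp add: k gauss_moment_even)
next
  case False
  then obtain j where k: "k = 2 * j + 1" by (elim oddE)
  show ?thesis using gauss_moment_odd[OF assms, of j] gauss_moment_odd[OF assms, of "Suc j"]
    by (simp add: k)
qed

section \<open>Walks, their weights and edge multiplicities\<close>

fun walk_steps :: "'a list \<Rightarrow> ('a \<times> 'a) list" where
  "walk_steps (u # v # w) = (u, v) # walk_steps (v # w)"
| "walk_steps _ = []"

definition edge :: "'a::linorder \<Rightarrow> 'a \<Rightarrow> 'a \<times> 'a" where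
  "edge u v = (min u v, max u v)"

definition walk_weight :: "('a \<Rightarrow> 'a \<Rightarrow> 'b::comm_monoid_mult) \<Rightarrow> 'a list \<Rightarrow> 'b" where
  "walk_weight W w = prod_list (map (case_prod W) (walk_steps w))"

definition edge_mult :: "'a::linorder list \<Rightarrow> 'a \<times> 'a \<Rightarrow> nat" where
  "edge_mult w e = count_list (map (case_prod edge) (walk_steps w)) e"

lemma edge_commute: "edge u v = edge v u"
  by (simp add: edge_def min.commute max.commute)

lemma walk_steps_append: "walk_steps (u @ c # v) = walk_steps (u @ [c]) @ walk_steps (c # v)"
  by (induction u rule: walk_steps.induct) auto

lemma set_walk_steps: "(u, v) \<in> set (walk_steps w) \<Longrightarrow> u \<in> set w \<and> v \<in> set w"
  by (induction w rule: walk_steps.induct) auto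

lemma walk_weight_singleton [simp]: "walk_weight W [u] = 1"
  by (simp add: walk_weight_def)

lemma walk_weight_Cons_Cons [simp]: "walk_weight W (u # v # w) = W u v * walk_weight W (v # w)"
  by (simp add: walk_weight_def)

lemma walk_weight_append: "walk_weight W (u @ c # v) = walk_weight W (u @ [c]) * walk_weight W (c # v)"
  unfolding walk_weight_def by (subst walk_steps_append) simp

lemma walk_weight_rev:
  assumes "\<And>a b. W a b = W b a"
  shows "walk_weight W (rev w) = walk_weight W w"
proof (induction w rule: walk_steps.induct)
  case (1 u v w)
  have "walk_weight W (rev (u # v # w)) = walk_weight W (rev w @ [v]) * walk_weight W [v, u]"
    using walk_weight_append[of W "rev w" v "[u]"] by simp
  then show ?case using 1 assms[of v u] by (simp add: mult.commute)
qed auto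

lemma prod_nth_eq_walk_weight:
  "length xs = l \<Longrightarrow> (\<Prod>k<l. W ((i # xs) ! k) (xs ! k)) = walk_weight W (i # xs)"
proof (induction xs arbitrary: i l)
  case (Cons x xs)
  then show ?case by (auto simp del: prod.lessThan_Suc simp add: prod.lessThan_Suc_shift)
qed simp

lemma prod_list_map_eq_prod_power_count:
  fixes f :: "'a \<Rightarrow> 'b::comm_monoid_mult"
  assumes "finite U" "set xs \<subseteq> U"
  shows "prod_list (map f xs) = (\<Prod>a\<in>U. f a ^ count_list xs a)"
  using assms(2)
proof (induction xs)
  case (Cons x xs)
  have "(\<Prod>a\<in>U. f a ^ count_list (x # xs) a) =
        (\<Prod>a\<in>U. (if x = a then f a else 1)) * (\<Prod>a\<in>U. f a ^ count_list xs a)"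
    by (subst prod.distrib [symmetric]) (auto intro: prod.cong)
  also have "(\<Prod>a\<in>U. (if x = a then f a else 1)) = f x"
    using Cons.prems assms(1) by (simp add: prod.delta)
  finally show ?case using Cons by simp
qed simp

lemma finite_upper_idx: "finite (upper_idx N)"
  by (rule finite_subset[of _ "{..<N} \<times> {..<N}"]) (auto simp: upper_idx_def)

lemma symW_eq_edge: "symW x u v = x (edge u v)"
  by (simp add: symW_def edge_def)

lemma walk_weight_symW:
  assumes "set w \<subseteq> {..<N}"
  shows "walk_weight (symW x) w = (\<Prod>a\<in>upper_idx N. x a ^ edge_mult w a)"
proof -
  have "set (map (case_prod edge) (walk_steps w)) \<subseteq> upper_idx N"
    using assms set_walk_steps by (fastforce simp: edge_def upper_idx_def)
  moreover have "walk_weight (symW x) w = prod_list (map x (map (case_prod edge) (walk_steps w)))"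
    unfolding walk_weight_def by (simp add: symW_eq_edge split_def comp_def)
  ultimately show ?thesis
    unfolding edge_mult_def by (metis finite_upper_idx prod_list_map_eq_prod_power_count)
qed

section \<open>The moments as sums over walks\<close>

definition walks :: "nat \<Rightarrow> nat \<Rightarrow> nat list set" where
  "walks N m = {w. length w = Suc m \<and> set w \<subseteq> {..<N}}"

lemma finite_walks: "finite (walks N m)"
  unfolding walks_def using finite_lists_length_eq[of "{..<N}" "Suc m"] by (simp add: conj_commute)

lemma nth_walk_less: "w \<in> walks N m \<Longrightarrow> p \<le> m \<Longrightarrow> w ! p < N"
  unfolding walks_def by (auto simp: subset_iff)

lemma beta_eq_sum_walk_weight:
  "beta N W i l = (\<Sum>xs\<in>{xs. length xs = l \<and> set xs \<subseteq> {..<N}}. walk_weight W (i # xs))"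
  unfolding beta_def by (intro sum.cong refl prod_nth_eq_walk_weight) simp

lemma sum_beta_mult_eq_sum_walks:
  assumes "\<And>a b. W a b = W b a"
  shows "(\<Sum>i<N. beta N W i l1 * beta N W i l2) = (\<Sum>w\<in>walks N (l1 + l2). walk_weight W w)"
proof -
  define L where "L l = {xs. length xs = l \<and> set xs \<subseteq> {..<N}}" for l
  define glue :: "nat \<times> nat list \<times> nat list \<Rightarrow> nat list"
    where "glue = (\<lambda>(i, xs, ys). rev xs @ i # ys)"
  have glue_weight: "walk_weight W (i # xs) * walk_weight W (i # ys) = walk_weight W (glue (i, xs, ys))"
    for i xs ys
    using walk_weight_rev[OF assms, where w = "i # xs"] walk_weight_append[of W "rev xs" i ys]
    by (simp add: glue_def)
  have "bij_betw glue ({..<N} \<times> L l1 \<times> L l2) (walks N (l1 + l2))"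
  proof (rule bij_betw_byWitness[where f' = "\<lambda>w. (w ! l1, rev (take l1 w), drop (Suc l1) w)"])
    show "\<forall>t\<in>{..<N} \<times> L l1 \<times> L l2. (glue t ! l1, rev (take l1 (glue t)), drop (Suc l1) (glue t)) = t"
      by (auto simp: glue_def L_def nth_append)
    show "\<forall>w\<in>walks N (l1 + l2). glue (w ! l1, rev (take l1 w), drop (Suc l1) w) = w"
      by (auto simp: glue_def walks_def id_take_nth_drop[symmetric])
    show "glue ` ({..<N} \<times> L l1 \<times> L l2) \<subseteq> walks N (l1 + l2)"
      by (auto simp: glue_def L_def walks_def)
    show "(\<lambda>w. (w ! l1, rev (take l1 w), drop (Suc l1) w)) ` walks N (l1 + l2) \<subseteq> {..<N} \<times> L l1 \<times> L l2"
      using nth_walk_less[of _ N "l1 + l2" l1]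
      by (auto simp: L_def walks_def dest!: in_set_takeD in_set_dropD)
  qed
  then have "(\<Sum>t\<in>{..<N} \<times> L l1 \<times> L l2. walk_weight W (glue t)) = (\<Sum>w\<in>walks N (l1 + l2). walk_weight W w)"
    by (rule sum.reindex_bij_betw)
  moreover have "(\<Sum>i<N. beta N W i l1 * beta N W i l2) = (\<Sum>t\<in>{..<N} \<times> L l1 \<times> L l2. walk_weight W (glue t))"
    unfolding beta_eq_sum_walk_weight L_def[symmetric]
    by (simp add: sum_product sum.cartesian_product glue_weight)
  ultimately show ?thesis by simp
qed

definition walk_moment :: "real \<Rightarrow> nat \<Rightarrow> nat list \<Rightarrow> real" where
  "walk_moment \<sigma> N w = (\<Prod>a\<in>upper_idx N. gauss_moment \<sigma> (edge_mult w a))"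

definition walk_moment_sum :: "real \<Rightarrow> nat \<Rightarrow> nat \<Rightarrow> real" where
  "walk_moment_sum \<sigma> N m = (\<Sum>w\<in>walks N m. walk_moment \<sigma> N w)"

lemma product_sigma_finite_gauss:
  assumes "\<sigma> > 0"
  shows "product_sigma_finite (\<lambda>_. density lborel (normal_density 0 \<sigma>))"
proof -
  interpret prob_space "density lborel (normal_density 0 \<sigma>)"
    using assms by (rule prob_space_normal_density)
  show ?thesis by (simp add: product_sigma_finite_def sigma_finite_measure_axioms)
qed

lemma integrable_gauss_monomial:
  "\<sigma> > 0 \<Longrightarrow> integrable (gauss_entries N \<sigma>) (\<lambda>x. \<Prod>a\<in>upper_idx N. x a ^ c a)"
  unfolding gauss_entries_def
  by (rule product_sigma_finite.product_integrable_prod[OF product_sigma_finite_gauss finite_upper_idx])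
     (auto intro: integrable_gauss_power)

lemma integral_gauss_monomial:
  "\<sigma> > 0 \<Longrightarrow> (\<integral>x. (\<Prod>a\<in>upper_idx N. x a ^ c a) \<partial>gauss_entries N \<sigma>) =
                 (\<Prod>a\<in>upper_idx N. gauss_moment \<sigma> (c a))"
  unfolding gauss_entries_def gauss_moment_def
  by (rule product_sigma_finite.product_integral_prod[OF product_sigma_finite_gauss finite_upper_idx])
     (auto intro: integrable_gauss_power)

lemma Bmom_eq_walk_moment_sum:
  assumes "\<sigma> > 0"
  shows "Bmom N \<sigma> l1 l2 = walk_moment_sum \<sigma> N (l1 + l2)"
proof -
  have "(\<Sum>i<N. beta N (symW x) i l1 * beta N (symW x) i l2) =
        (\<Sum>w\<in>walks N (l1 + l2). \<Prod>a\<in>upper_idx N. x a ^ edge_mult w a)" for x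
    by (subst sum_beta_mult_eq_sum_walks)
       (auto simp: symW_def min.commute max.commute walks_def intro!: sum.cong walk_weight_symW)
  then have "Bmom N \<sigma> l1 l2 =
      (\<Sum>w\<in>walks N (l1 + l2). \<integral>x. (\<Prod>a\<in>upper_idx N. x a ^ edge_mult w a) \<partial>gauss_entries N \<sigma>)"
    unfolding Bmom_def using integrable_gauss_monomial[OF assms] by simp
  also have "\<dots> = walk_moment_sum \<sigma> N (l1 + l2)"
    unfolding walk_moment_sum_def walk_moment_def using integral_gauss_monomial[OF assms] by simp
  finally show ?thesis .
qed

section \<open>Inserting detours\<close>

definition insert_detour :: "nat \<Rightarrow> 'a \<Rightarrow> 'a list \<Rightarrow> 'a list" where
  "insert_detour p j w = take (Suc p) w @ j # drop p w"

lemma insert_detour_conv: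
  assumes "p < length w"
  obtains u c v where "w = u @ c # v" "c = w ! p" "insert_detour p j w = u @ c # j # c # v"
proof (rule that[of "take p w" "w ! p" "drop (Suc p) w"])
  show "w = take p w @ w ! p # drop (Suc p) w"
    using assms by (rule id_take_nth_drop)
  show "insert_detour p j w = take p w @ w ! p # j # w ! p # drop (Suc p) w"
    using assms by (simp add: insert_detour_def take_Suc_conv_app_nth Cons_nth_drop_Suc)
qed simp

lemma edge_mult_insert_detour:
  assumes "p < length w"
  shows "edge_mult (insert_detour p j w) e = edge_mult w e + (if e = edge (w ! p) j then 2 else 0)"
proof -
  obtain u c v where w: "w = u @ c # v" and c: "c = w ! p"
    and detour: "insert_detour p j w = u @ c # j # c # v"
    using insert_detour_conv[OF assms] .
  have "walk_steps w = walk_steps (u @ [c]) @ walk_steps (c # v)"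
    unfolding w by (rule walk_steps_append)
  moreover have "walk_steps (insert_detour p j w) = walk_steps (u @ [c]) @ (c, j) # (j, c) # walk_steps (c # v)"
    unfolding detour by (subst walk_steps_append) simp
  ultimately show ?thesis
    unfolding edge_mult_def using edge_commute[of j c] by (simp add: c)
qed

lemma insert_detour_in_walks:
  "w \<in> walks N m \<Longrightarrow> p \<le> m \<Longrightarrow> j < N \<Longrightarrow> insert_detour p j w \<in> walks N (Suc (Suc m))"
  by (auto simp: walks_def insert_detour_def dest!: in_set_takeD in_set_dropD)

lemma insert_detour_inject:
  assumes eq: "insert_detour p j w = insert_detour p j' w'"
    and "p < length w" "length w' = length w"
  shows "w = w' \<and> j = j'"
proof -
  have "take (Suc p) w = take (Suc p) w'"
    using arg_cong[OF eq, of "take (Suc p)"] assms by (simp add: insert_detour_def)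
  moreover have "drop (Suc p) w = drop (Suc p) w'"
    using arg_cong[OF eq, of "drop (Suc (Suc (Suc p)))"] assms by (simp add: insert_detour_def)
  moreover have "j = j'"
    using arg_cong[OF eq, of "\<lambda>x. x ! Suc p"] assms by (simp add: insert_detour_def nth_append)
  ultimately show ?thesis
    by (metis append_take_drop_id)
qed

lemma walk_moment_nonneg: "\<sigma> > 0 \<Longrightarrow> 0 \<le> walk_moment \<sigma> N w"
  unfolding walk_moment_def by (intro prod_nonneg gauss_moment_nonneg)

lemma walk_moment_insert_detour:
  assumes "\<sigma> > 0" and w: "w \<in> walks N m" and "p \<le> m" "j < N"
  shows "walk_moment \<sigma> N (insert_detour p j w) =
           \<sigma>\<^sup>2 * (edge_mult w (edge (w ! p) j) + 1) * walk_moment \<sigma> N w"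
proof -
  define e where "e = edge (w ! p) j"
  have p: "p < length w" using assms by (simp add: walks_def)
  have e: "e \<in> upper_idx N"
    using nth_walk_less[OF w \<open>p \<le> m\<close>] \<open>j < N\<close> by (auto simp: e_def edge_def upper_idx_def)
  have "walk_moment \<sigma> N (insert_detour p j w) =
        gauss_moment \<sigma> (Suc (Suc (edge_mult w e))) *
        (\<Prod>a\<in>upper_idx N - {e}. gauss_moment \<sigma> (edge_mult w a))"
    unfolding walk_moment_def prod.remove[OF finite_upper_idx e]
    by (intro arg_cong2[where f = "(*)"] prod.cong) (auto simp: edge_mult_insert_detour[OF p] e_def)
  also have "\<dots> = \<sigma>\<^sup>2 * (edge_mult w e + 1) * walk_moment \<sigma> N w"
    unfolding walk_moment_def prod.remove[OF finite_upper_idx e] gauss_moment_Suc_Suc[OF assms(1)]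
    by (simp add: mult.assoc)
  finally show ?thesis by (simp add: e_def)
qed

lemma sum_walk_moment_detours_le:
  assumes "\<sigma> > 0"
  shows "(\<Sum>w\<in>walks N m. \<Sum>p\<le>m. \<Sum>j<N. walk_moment \<sigma> N (insert_detour p j w)) \<le>
           (real m + 1) * walk_moment_sum \<sigma> N (Suc (Suc m))"
proof -
  have "(\<Sum>t\<in>walks N m \<times> {..<N}. walk_moment \<sigma> N (case t of (w, j) \<Rightarrow> insert_detour p j w)) \<le>
          walk_moment_sum \<sigma> N (Suc (Suc m))" if "p \<le> m" for p
  proof -
    have "inj_on (\<lambda>(w, j). insert_detour p j w) (walks N m \<times> {..<N})"
      using that by (intro inj_onI) (auto simp: walks_def dest: insert_detour_inject)
    then have "(\<Sum>t\<in>walks N m \<times> {..<N}. walk_moment \<sigma> N (case t of (w, j) \<Rightarrow> insert_detour p j w)) =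
               (\<Sum>w\<in>(\<lambda>(w, j). insert_detour p j w) ` (walks N m \<times> {..<N}). walk_moment \<sigma> N w)"
      by (simp add: sum.reindex)
    also have "\<dots> \<le> walk_moment_sum \<sigma> N (Suc (Suc m))"
      unfolding walk_moment_sum_def using that
      by (intro sum_mono2 finite_walks) (auto intro: insert_detour_in_walks walk_moment_nonneg[OF assms])
    finally show ?thesis .
  qed
  then have "(\<Sum>p\<le>m. \<Sum>w\<in>walks N m. \<Sum>j<N. walk_moment \<sigma> N (insert_detour p j w)) \<le>
             (\<Sum>p\<le>m. walk_moment_sum \<sigma> N (Suc (Suc m)))"
    by (intro sum_mono) (simp add: sum.cartesian_product split_def)
  moreover have "(\<Sum>w\<in>walks N m. \<Sum>p\<le>m. \<Sum>j<N. walk_moment \<sigma> N (insert_detour p j w)) =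
                 (\<Sum>p\<le>m. \<Sum>w\<in>walks N m. \<Sum>j<N. walk_moment \<sigma> N (insert_detour p j w))"
    by (rule sum.swap)
  ultimately show ?thesis by (simp add: add.commute)
qed

section \<open>Counting the detours\<close>

lemma edge_mult_Cons_Cons:
  "edge_mult (u # v # w) e = of_bool (edge u v = e) + edge_mult (v # w) e"
  by (simp add: edge_mult_def)

text \<open>Every visit of \<open>v\<close> after the start is entered along an edge at \<open>v\<close>.\<close>

lemma count_tl_le_sum_edge_mult:
  fixes N :: nat
  assumes "set w \<subseteq> {..<N}"
  shows "count_list (tl w) v \<le> (\<Sum>j<N. edge_mult w (edge v j))"
  using assms
proof (induction w rule: walk_steps.induct)
  case (1 u u' w)
  have "of_bool (u' = v) \<le> (\<Sum>j<N. of_bool (edge u u' = edge v j) :: nat)"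
  proof (cases "u' = v")
    case True
    have "of_bool (edge u u' = edge v u) \<le> (\<Sum>j<N. of_bool (edge u u' = edge v j) :: nat)"
      by (rule member_le_sum) (use "1.prems" in auto)
    then show ?thesis using True by (simp add: edge_commute del: sum_of_bool_eq)
  qed simp
  moreover have "count_list w v \<le> (\<Sum>j<N. edge_mult (u' # w) (edge v j))"
    using 1 by simp
  moreover have "count_list (tl (u # u' # w)) v = of_bool (u' = v) + count_list w v"
    by simp
  moreover have "(\<Sum>j<N. edge_mult (u # u' # w) (edge v j)) =
      (\<Sum>j<N. of_bool (edge u u' = edge v j)) + (\<Sum>j<N. edge_mult (u' # w) (edge v j))"
    by (simp add: edge_mult_Cons_Cons sum.distrib del: sum_of_bool_eq)
  ultimately show ?case by linarith
qed auto

lemma length_sq_le_sum_count_list: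
  assumes "set w \<subseteq> {..<N}"
  shows "(length w)\<^sup>2 \<le> N * (\<Sum>x\<leftarrow>w. count_list w x)"
proof -
  have "(\<Sum>x\<leftarrow>w. count_list w x) = (\<Sum>x<N. (count_list w x)\<^sup>2)"
    by (simp add: sum_list_map_eq_sum_count2[OF assms] power2_eq_square)
  moreover have "(\<Sum>x<N. count_list w x) = length w"
    using sum_count_set[OF assms] by simp
  ultimately have "(real (length w))\<^sup>2 \<le> real N * real (\<Sum>x\<leftarrow>w. count_list w x)"
    using sum_squared_le_sum_of_squares[of "\<lambda>x. real (count_list w x)" "{..<N}"]
    by (simp add: mult.commute flip: of_nat_sum of_nat_power)
  then show ?thesis by (simp flip: of_nat_power of_nat_mult)
qed

lemma sum_count_list_le_sum_edge_mult:
  assumes "set w \<subseteq> {..<N}"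
  shows "(\<Sum>x\<leftarrow>w. count_list w x) + length w * N \<le>
           (\<Sum>x\<leftarrow>w. \<Sum>j<N. edge_mult w (edge x j) + 1) + length w"
proof -
  define E where "E x = (\<Sum>j<N. edge_mult w (edge x j))" for x
  have "(\<Sum>x\<leftarrow>w. count_list w x) \<le> (\<Sum>x\<leftarrow>w. E x + 1)"
  proof (rule sum_list_mono)
    fix x
    have "count_list w x \<le> count_list (tl w) x + 1" by (cases w) auto
    then show "count_list w x \<le> E x + 1"
      using count_tl_le_sum_edge_mult[OF assms, of x] unfolding E_def by linarith
  qed
  moreover have "(\<Sum>x\<leftarrow>w. E x + 1) = (\<Sum>x\<leftarrow>w. E x) + length w"
    by (simp add: sum_list_addf sum_list_triv del: add_Suc_right)
  moreover have "(\<Sum>x\<leftarrow>w. \<Sum>j<N. edge_mult w (edge x j) + 1) = (\<Sum>x\<leftarrow>w. E x) + length w * N"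
    by (simp add: E_def sum.distrib sum_list_addf sum_list_triv del: add_Suc_right)
  ultimately show ?thesis by linarith
qed

lemma sum_edge_mult_detours_ge:
  assumes "set w \<subseteq> {..<N}"
  shows "real (length w) * (real N - 1) + (real (length w))\<^sup>2 / real N \<le>
           real (\<Sum>x\<leftarrow>w. \<Sum>j<N. edge_mult w (edge x j) + 1)"
proof -
  define n S T where "n = length w" and "S = (\<Sum>x\<leftarrow>w. count_list w x)"
    and "T = (\<Sum>x\<leftarrow>w. \<Sum>j<N. edge_mult w (edge x j) + 1)"
  have "real S + real n * real N \<le> real T + real n"
    using sum_count_list_le_sum_edge_mult[OF assms] unfolding n_def S_def T_def
    by (simp flip: of_nat_mult of_nat_add)
  moreover have "(real n)\<^sup>2 / real N \<le> real S"
    using length_sq_le_sum_count_list[OF assms] unfolding n_def S_def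
    by (cases "N = 0") (auto simp: divide_le_eq mult.commute simp flip: of_nat_power of_nat_mult)
  ultimately show ?thesis unfolding n_def S_def T_def by (simp add: algebra_simps)
qed

section \<open>The moment recursion\<close>

lemma sum_walk_moment_detours:
  assumes "\<sigma> > 0" and w: "w \<in> walks N m"
  shows "(\<Sum>p\<le>m. \<Sum>j<N. walk_moment \<sigma> N (insert_detour p j w)) =
           \<sigma>\<^sup>2 * walk_moment \<sigma> N w * real (\<Sum>x\<leftarrow>w. \<Sum>j<N. edge_mult w (edge x j) + 1)"
proof -
  define g where "g x = (\<Sum>j<N. edge_mult w (edge x j) + 1)" for x
  have "(\<Sum>p\<le>m. \<Sum>j<N. walk_moment \<sigma> N (insert_detour p j w)) =
        \<sigma>\<^sup>2 * walk_moment \<sigma> N w * (\<Sum>p\<le>m. real (g (w ! p)))"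
    unfolding sum_distrib_left g_def
    by (intro sum.cong refl) (simp add: walk_moment_insert_detour[OF assms] sum_distrib_left mult_ac)
  also have "(\<Sum>p\<le>m. real (g (w ! p))) = real (\<Sum>x\<leftarrow>w. g x)"
    using w by (simp add: walks_def sum_list_sum_nth atLeast0LessThan lessThan_Suc_atMost)
  finally show ?thesis unfolding g_def .
qed

lemma walk_moment_sum_nonneg: "\<sigma> > 0 \<Longrightarrow> 0 \<le> walk_moment_sum \<sigma> N m"
  unfolding walk_moment_sum_def by (intro sum_nonneg walk_moment_nonneg)

lemma walk_moment_sum_weighted_le:
  assumes "\<sigma> > 0"
  shows "\<sigma>\<^sup>2 * (real (Suc m) * (real N - 1) + (real (Suc m))\<^sup>2 / real N) * walk_moment_sum \<sigma> N m \<le>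
           (real m + 1) * walk_moment_sum \<sigma> N (Suc (Suc m))"
    (is "\<sigma>\<^sup>2 * ?K * _ \<le> _")
proof -
  have "\<sigma>\<^sup>2 * ?K * walk_moment_sum \<sigma> N m = (\<Sum>w\<in>walks N m. \<sigma>\<^sup>2 * walk_moment \<sigma> N w * ?K)"
    by (simp add: walk_moment_sum_def sum_distrib_left sum_distrib_right mult_ac)
  also have "\<dots> \<le> (\<Sum>w\<in>walks N m.
      \<sigma>\<^sup>2 * walk_moment \<sigma> N w * real (\<Sum>x\<leftarrow>w. \<Sum>j<N. edge_mult w (edge x j) + 1))"
  proof (intro sum_mono mult_left_mono)
    fix w assume "w \<in> walks N m"
    then show "?K \<le> real (\<Sum>x\<leftarrow>w. \<Sum>j<N. edge_mult w (edge x j) + 1)"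
      using sum_edge_mult_detours_ge[of w N] by (simp add: walks_def)
  qed (use walk_moment_nonneg[OF assms] in simp)
  also have "\<dots> = (\<Sum>w\<in>walks N m. \<Sum>p\<le>m. \<Sum>j<N. walk_moment \<sigma> N (insert_detour p j w))"
    by (intro sum.cong refl) (simp add: sum_walk_moment_detours[OF assms])
  also have "\<dots> \<le> (real m + 1) * walk_moment_sum \<sigma> N (Suc (Suc m))"
    by (rule sum_walk_moment_detours_le[OF assms])
  finally show ?thesis .
qed

lemma walk_moment_sum_recursion:
  assumes "\<sigma> > 0" "N \<ge> 1"
  defines "d \<equiv> real N * (real N + 1) / 2"
  shows "\<sigma>\<^sup>2 * (real m + d) * walk_moment_sum \<sigma> N m \<le> d * walk_moment_sum \<sigma> N (Suc (Suc m))"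
proof -
  define K where "K = real (Suc m) * (real N - 1) + (real (Suc m))\<^sup>2 / real N"
  define S where "S = walk_moment_sum \<sigma> N"
  have "(real m + 1) * (real m + d) \<le> d * K"
  proof -
    have "d * K - (real m + 1) * (real m + d) =
          (real m + 1) * ((real N - 1)\<^sup>2 * (real N + 1) + real m * (real N - 1)) / 2"
      using assms(2) unfolding d_def K_def by (simp add: field_simps power2_eq_square)
    also have "\<dots> \<ge> 0" using assms(2) by simp
    finally show ?thesis by simp
  qed
  then have "(real m + 1) * (real m + d) * (\<sigma>\<^sup>2 * S m) \<le> d * K * (\<sigma>\<^sup>2 * S m)"
    using walk_moment_sum_nonneg[OF assms(1)] by (intro mult_right_mono) (simp_all add: S_def)
  then have "(real m + 1) * (\<sigma>\<^sup>2 * (real m + d) * S m) \<le> d * (\<sigma>\<^sup>2 * K * S m)"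
    by (simp add: mult_ac)
  also have "\<dots> \<le> (real m + 1) * (d * S (Suc (Suc m)))"
    using mult_left_mono[OF walk_moment_sum_weighted_le[OF assms(1), where m = m and N = N], of d]
    by (simp add: S_def K_def d_def mult_ac)
  finally show ?thesis
    by (simp add: S_def)
qed

theorem mainTheorem9:
  fixes N T l1 l2 :: nat and \<sigma> :: real
  assumes "N \<ge> 1" and "\<sigma> > 0" and "T \<ge> 1"
    and "l1 < T" and "l2 < T"
  shows "Bmom N \<sigma> l1 l2 \<le>
           (1 / \<sigma>\<^sup>2) * (1 / (real (l1 + l2) / (real N * (real N + 1) / 2) + 1))
             * Bmom N \<sigma> (l1 + 1) (l2 + 1)"
proof -
  define m d where "m = l1 + l2" and "d = real N * (real N + 1) / 2"
  have "d > 0" using assms(1) by (simp add: d_def)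
  have "Bmom N \<sigma> l1 l2 = walk_moment_sum \<sigma> N m"
    and "Bmom N \<sigma> (l1 + 1) (l2 + 1) = walk_moment_sum \<sigma> N (Suc (Suc m))"
    using Bmom_eq_walk_moment_sum[OF assms(2)] by (simp_all add: m_def)
  moreover have "(1 / \<sigma>\<^sup>2) * (1 / (real m / d + 1)) = d / (\<sigma>\<^sup>2 * (real m + d))"
    using \<open>d > 0\<close> by (simp add: field_simps)
  moreover have "\<sigma>\<^sup>2 * (real m + d) > 0"
    using \<open>d > 0\<close> assms(2) by simp
  ultimately show ?thesis
    using walk_moment_sum_recursion[OF assms(2,1), of m]
    by (simp add: m_def d_def pos_le_divide_eq mult_ac)
qed
end
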